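(* Consider a CPM scheme with alphabet size $M>2$, impulse length $L$ and modulation index $h=Q/P$ ($Q,P$ relatively prime positive integers). Suppose that every difference sequence $\mathbf{b}$ achieving the minimum Euclidean distance of the scheme has length $\Delta(\mathbf{b})=2$ and $b_2=\pm1$, and that $P$ is a multiple of $M$. Then there exists a partition of the set of trellis edges into $M$ sets $\mathcal{T}(0),\dots,\mathcal{T}(M-1)$, each of cardinality $PM^{L-1}$, such that (i) for every difference sequence $\mathbf{b}$ achieving the minimum Euclidean distance, any two edges adjacent in $\mathcal{G}(\mathbf{b})$ lie in the same set, and (ii) any two distinct edges leaving the same trellis state lie in different sets.
   Context: CPM trellis (Rimoldi decomposition). Fix $M\ge2$, $L\ge1$, relatively prime positive integers $Q,P$, $h=Q/P$. Input symbols $a_n\in\{0,\dots,M-1\}$. The state at time $n$ is $(a_{n-L+1},\dots,a_{n-1};\beta_n)$ with $\beta_n\in\{0,\dots,P-1\}$ and $\beta_{n+1}=(\beta_n+Qa_{n-L+1})_P$ ($(l)_P$ = $l$ mod $P$). A trellis edge is $(\boldsymbol{\alpha},\beta)$, $\boldsymbol{\alpha}=(\alpha_1,\dots,\alpha_L)\in\{0,\dots,M-1\}^L$, $\beta$ the phase of its starting state $((\alpha_1,\dots,\alpha_{L-1});\beta)$; its ending state is $((\alpha_2,\dots,\alpha_L);(\beta+Q\alpha_1)_P)$. There are $PM^L$ edges. CPM signal: an input sequence $(a_n)$ produces $x(t)=\exp\!\big(j\,2\pi h\sum_n(2a_n-(M-1))\,q(t-nT)\big)$ (up to a constant amplitude),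 where $T>0$ and the phase pulse $q$ is continuous with $q(t)=0$ for $t\le0$ and $q(t)=1/2$ for $t\ge LT$. A difference sequence is $\mathbf{b}=(b_1,\dots,b_\Delta)$ with entries in $\{-(M-1),\dots,M-1\}$, $b_1\ne0$, $b_\Delta\ne0$, admitting error events (i.e. $\sum_n b_n\equiv0\pmod P$); $\Delta(\mathbf{b})=\Delta$. An error event generated by $\mathbf{b}$ is a pair of trellis paths from a common starting state with inputs $a^{(1)},a^{(2)}$ such that $a^{(1)}_n-a^{(2)}_n=b_n$ for $1\le n\le\Delta$ and equal inputs afterwards, merging after $\Delta+L-1$ steps; an edge pair is the two edges at the same step. The squared Euclidean distance $\int|x^{(1)}(t)-x^{(2)}(t)|^2dt$ of an error event depends only on $\mathbf{b}$; the minimum Euclidean distance of the scheme is its minimum over all difference sequences. Graph $\mathcal{G}(\mathbf{b})$: vertices are trellis edges; two vertices are adjacent iff the edges have different starting states and form an edge pair of some error event generated by $\mathbf{b}$. *)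

theory Defs
  imports "HOL-Analysis.Analysis"
begin

text \<open>CPM trellis (Rimoldi decomposition). A trellis edge is a pair
  (alpha, beta) with alpha a list of length L over {0..M-1} and beta in {0..P-1}.\<close>

definition cpm_edges :: "nat \<Rightarrow> nat \<Rightarrow> nat \<Rightarrow> (nat list \<times> nat) set" where
  "cpm_edges M L P = {(\<alpha>, \<beta>). length \<alpha> = L \<and> (\<forall>x\<in>set \<alpha>. x < M) \<and> \<beta> < P}"

definition start_state :: "nat \<Rightarrow> nat list \<times> nat \<Rightarrow> nat list \<times> nat" where
  "start_state L e = (take (L - 1) (fst e), snd e)"

definition end_state :: "nat \<Rightarrow> nat \<Rightarrow> nat list \<times> nat \<Rightarrow> nat list \<times> nat" where
  "end_state Q P e = (drop 1 (fst e), (snd e + Q * hd (fst e)) mod P)"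

text \<open>Phase beta_n at time n \<ge> 1 of the path with inputs a (indexed by integers),
  whose phase at time 1 is beta1: beta_{n+1} = (beta_n + Q a_{n-L+1}) mod P.\<close>
definition cpm_phase :: "nat \<Rightarrow> nat \<Rightarrow> nat \<Rightarrow> nat \<Rightarrow> (int \<Rightarrow> nat) \<Rightarrow> nat \<Rightarrow> nat" where
  "cpm_phase L Q P \<beta>1 a n = (\<beta>1 + Q * (\<Sum>k\<in>{2 - int L .. int n - int L}. a k)) mod P"

text \<open>Trellis edge traversed at step n (from the state at time n to the state at time n+1):
  alpha = (a_{n-L+1},...,a_n), beta = beta_n.\<close>
definition path_edge :: "nat \<Rightarrow> nat \<Rightarrow> nat \<Rightarrow> nat \<Rightarrow> (int \<Rightarrow> nat) \<Rightarrow> nat \<Rightarrow> nat list \<times> nat" where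
  "path_edge L Q P \<beta>1 a n =
     (map (\<lambda>i. a (int n - int L + 1 + int i)) [0..<L], cpm_phase L Q P \<beta>1 a n)"

text \<open>Difference sequences b = (b_1..b_Delta) (list, b_n = b ! (n-1)) admitting error events.\<close>
definition is_diff_seq :: "nat \<Rightarrow> nat \<Rightarrow> int list \<Rightarrow> bool" where
  "is_diff_seq M P b \<longleftrightarrow> b \<noteq> [] \<and> (\<forall>x\<in>set b. \<bar>x\<bar> \<le> int M - 1) \<and>
     hd b \<noteq> 0 \<and> last b \<noteq> 0 \<and> int P dvd sum_list b"

text \<open>An error event generated by b: two trellis paths with inputs a1, a2 starting at time 1
  from a common state (common past inputs, common phase beta1), with a1_n - a2_n = b_n for
  1 \<le> n \<le> Delta, equal inputs afterwards, merging after Delta+L-1 steps.\<close>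
definition error_event ::
  "nat \<Rightarrow> nat \<Rightarrow> nat \<Rightarrow> nat \<Rightarrow> int list \<Rightarrow> nat \<Rightarrow> (int \<Rightarrow> nat) \<Rightarrow> (int \<Rightarrow> nat) \<Rightarrow> bool" where
  "error_event M L Q P b \<beta>1 a1 a2 \<longleftrightarrow>
     is_diff_seq M P b \<and> \<beta>1 < P \<and>
     (\<forall>k. a1 k < M \<and> a2 k < M) \<and>
     (\<forall>k\<le>0. a1 k = a2 k) \<and>
     (\<forall>k>int (length b). a1 k = a2 k) \<and>
     (\<forall>n\<in>{1..length b}. int (a1 (int n)) - int (a2 (int n)) = b ! (n - 1)) \<and>
     cpm_phase L Q P \<beta>1 a1 (length b + L) = cpm_phase L Q P \<beta>1 a2 (length b + L)"

definition adjacent_G ::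
  "nat \<Rightarrow> nat \<Rightarrow> nat \<Rightarrow> nat \<Rightarrow> int list \<Rightarrow> nat list \<times> nat \<Rightarrow> nat list \<times> nat \<Rightarrow> bool" where
  "adjacent_G M L Q P b e e' \<longleftrightarrow>
     e \<in> cpm_edges M L P \<and> e' \<in> cpm_edges M L P \<and> start_state L e \<noteq> start_state L e' \<and>
     (\<exists>\<beta>1 a1 a2 n. error_event M L Q P b \<beta>1 a1 a2 \<and> 1 \<le> n \<and> n \<le> length b + L - 1 \<and>
        {e, e'} = {path_edge L Q P \<beta>1 a1 n, path_edge L Q P \<beta>1 a2 n})"

text \<open>Squared Euclidean distance of an error event generated by b:
  |x1(t) - x2(t)|^2 = |1 - exp(j(phi1(t) - phi2(t)))|^2 with
  phi1(t) - phi2(t) = 2 pi h sum_{n=1}^{Delta} 2 b_n q(t - nT).\<close>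
definition sq_dist :: "nat \<Rightarrow> nat \<Rightarrow> real \<Rightarrow> (real \<Rightarrow> real) \<Rightarrow> int list \<Rightarrow> real" where
  "sq_dist Q P T q b =
     (\<integral>t. (cmod (1 - exp (\<i> * complex_of_real
        (2 * pi * (real Q / real P) *
          (\<Sum>i<length b. 2 * real_of_int (b ! i) * q (t - real (i + 1) * T))))))\<^sup>2 \<partial>lborel)"

definition achieves_min_dist :: "nat \<Rightarrow> nat \<Rightarrow> nat \<Rightarrow> real \<Rightarrow> (real \<Rightarrow> real) \<Rightarrow> int list \<Rightarrow> bool" where
  "achieves_min_dist M Q P T q b \<longleftrightarrow>
     is_diff_seq M P b \<and> (\<forall>b'. is_diff_seq M P b' \<longrightarrow> sq_dist Q P T q b \<le> sq_dist Q P T q b')"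

end

theory Submission
  imports Defs "HOL-Number_Theory.Cong"
begin

text \<open>Label every trellis edge \<open>(\<alpha>, \<beta>)\<close> by \<open>(\<beta> + Q (\<alpha>\<^sub>1 + \<dots> + \<alpha>\<^sub>L)) mod M\<close>. Since \<open>M\<close> divides
  \<open>P\<close>, the label of the edge a path traverses at step \<open>n\<close> is the running input sum
  \<open>\<beta>\<^sub>1 + Q \<Sigma>\<^sub>k\<^sub>\<le>\<^sub>n a\<^sub>k\<close> reduced modulo \<open>M\<close>. The two paths of an error event generated by \<open>b\<close>
  have running sums differing by \<open>\<Sigma> b \<equiv> 0 (mod P)\<close> from step \<open>\<Delta>(b)\<close> on, so for \<open>\<Delta>(b) = 2\<close> the
  edge pairs at steps \<open>n \<ge> 2\<close> share their label, while at step 1 they leave a common state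
  and are not adjacent. On the other hand, edges leaving one state differ only in \<open>\<alpha>\<^sub>L\<close>,
  and \<open>y \<mapsto> (c + Q y) mod M\<close> is a bijection of \<open>{0..M-1}\<close> because \<open>Q\<close> is prime to \<open>P\<close>,
  hence to \<open>M\<close>: the edges leaving a state carry pairwise distinct labels, one of each.\<close>

definition edge_label :: "nat \<Rightarrow> nat \<Rightarrow> nat list \<times> nat \<Rightarrow> nat" where
  "edge_label M Q e = (snd e + Q * sum_list (fst e)) mod M"

lemma affine_mod_bij_betw:
  fixes c Q M :: nat
  assumes "coprime Q M" "M > 0"
  shows "bij_betw (\<lambda>y. (c + Q * y) mod M) {..<M} {..<M}"
proof -
  have "inj_on (\<lambda>y. (c + Q * y) mod M) {..<M}"
  proof (rule inj_onI)
    fix x y :: nat assume "x \<in> {..<M}" "y \<in> {..<M}" "(c + Q * x) mod M = (c + Q * y) mod M"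
    then have "[x = y] (mod M)" and "x < M" "y < M"
      using assms(1) by (simp_all add: cong_def[symmetric] cong_add_lcancel_nat cong_mult_lcancel_nat)
    then show "x = y" using cong_less_modulus_unique_nat by blast
  qed
  moreover have "(\<lambda>y. (c + Q * y) mod M) ` {..<M} \<subseteq> {..<M}" using assms(2) by auto
  ultimately show ?thesis by (simp add: bij_betw_def endo_inj_surj)
qed

lemma cpm_edgesE:
  assumes "e \<in> cpm_edges M L P" "L \<ge> 1"
  obtains s y \<beta> where "e = (s @ [y], \<beta>)" "length s = L - 1" "set s \<subseteq> {..<M}" "y < M" "\<beta> < P"
proof -
  obtain \<alpha> \<beta> where e: "e = (\<alpha>, \<beta>)" "length \<alpha> = L" "\<forall>x\<in>set \<alpha>. x < M" "\<beta> < P"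
    using assms(1) unfolding cpm_edges_def by auto
  moreover have "\<alpha> \<noteq> []" using e(2) assms(2) by auto
  moreover have "set (butlast \<alpha>) \<subseteq> {..<M}" using e(3) by (auto dest: in_set_butlastD)
  ultimately show thesis using that[of "butlast \<alpha>" "last \<alpha>" \<beta>] by simp
qed

lemma snoc_in_cpm_edges_iff:
  "(s @ [y], \<beta>) \<in> cpm_edges M L P \<longleftrightarrow> length s + 1 = L \<and> set s \<subseteq> {..<M} \<and> y < M \<and> \<beta> < P"
  unfolding cpm_edges_def by auto

lemma start_state_snoc [simp]: "length s = L - 1 \<Longrightarrow> start_state L (s @ [y], \<beta>) = (s, \<beta>)"
  by (simp add: start_state_def)

lemma edge_label_snoc [simp]:
  "edge_label M Q (s @ [y], \<beta>) = (\<beta> + Q * sum_list s + Q * y) mod M"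
  by (simp add: edge_label_def algebra_simps)

lemma edge_label_less: "M > 0 \<Longrightarrow> edge_label M Q e < M"
  by (simp add: edge_label_def)

lemma edge_label_inj_on_start_state:
  assumes "coprime Q M" "L \<ge> 1" "e \<in> cpm_edges M L P" "e' \<in> cpm_edges M L P"
    and "start_state L e = start_state L e'" "edge_label M Q e = edge_label M Q e'"
  shows "e = e'"
proof -
  obtain s y \<beta> where e: "e = (s @ [y], \<beta>)" "length s = L - 1" "y < M"
    using cpm_edgesE[OF assms(3,2)] by metis
  obtain s' y' \<beta>' where e': "e' = (s' @ [y'], \<beta>')" "length s' = L - 1" "y' < M"
    using cpm_edgesE[OF assms(4,2)] by metis
  have same_state: "s' = s" "\<beta>' = \<beta>" using assms(5) e e' by simp_all
  then have "(\<beta> + Q * sum_list s + Q * y) mod M = (\<beta> + Q * sum_list s + Q * y') mod M"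
    using assms(6) e e' by simp
  moreover have "inj_on (\<lambda>y. (\<beta> + Q * sum_list s + Q * y) mod M) {..<M}"
    using affine_mod_bij_betw[OF assms(1)] e(3) by (simp add: bij_betw_def)
  ultimately have "y = y'" using e(3) e'(3) by (auto dest: inj_onD)
  then show ?thesis using e e' same_state by simp
qed

lemma card_edge_label_class:
  assumes "coprime Q M" "L \<ge> 1" "i < M"
  shows "card {e \<in> cpm_edges M L P. edge_label M Q e = i} = P * M ^ (L - 1)"
proof -
  define states where "states = {s. set s \<subseteq> {..<M} \<and> length s = L - 1} \<times> {..<P}"
  let ?class = "{e \<in> cpm_edges M L P. edge_label M Q e = i}"
  have "start_state L ` ?class \<subseteq> states"
  proof
    fix x assume "x \<in> start_state L ` ?class"
    then obtain e where "e \<in> cpm_edges M L P" "x = start_state L e" by auto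
    then show "x \<in> states" unfolding states_def using assms(2) by (elim cpm_edgesE) auto
  qed
  moreover have "states \<subseteq> start_state L ` ?class"
  proof
    fix x assume "x \<in> states"
    then obtain s \<beta> where x: "x = (s, \<beta>)" "set s \<subseteq> {..<M}" "length s = L - 1" "\<beta> < P"
      unfolding states_def by auto
    have "i \<in> (\<lambda>y. (\<beta> + Q * sum_list s + Q * y) mod M) ` {..<M}"
      using bij_betw_imp_surj_on[OF affine_mod_bij_betw[OF assms(1)]] assms(3) by simp
    then obtain y where "y < M" "(\<beta> + Q * sum_list s + Q * y) mod M = i" by auto
    then have "(s @ [y], \<beta>) \<in> ?class"
      using x assms(2) by (simp add: snoc_in_cpm_edges_iff)
    then show "x \<in> start_state L ` ?class" using x(1,3) by force
  qed
  moreover have "inj_on (start_state L) ?class"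
    using edge_label_inj_on_start_state[OF assms(1,2)] by (auto intro: inj_onI)
  ultimately have "card ?class = card states"
    by (intro bij_betw_same_card) (auto simp: bij_betw_def)
  also have "\<dots> = P * M ^ (L - 1)"
    by (simp add: states_def card_cartesian_product card_lists_length_eq)
  finally show ?thesis .
qed

lemma sum_list_map_upt_int_shift:
  fixes a :: "int \<Rightarrow> 'b::comm_monoid_add"
  shows "sum_list (map (\<lambda>i. a (c + int i)) [0..<L]) = (\<Sum>k\<in>{c..c + int L - 1}. a k)"
  unfolding sum_list_distinct_conv_sum_set[OF distinct_upt] set_upt
  by (rule sum.reindex_bij_witness[of _ "\<lambda>k. nat (k - c)" "\<lambda>i. c + int i"]) auto

lemma edge_label_path_edge:
  assumes "M dvd P" "L \<ge> 1" "n \<ge> 1"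
  shows "edge_label M Q (path_edge L Q P \<beta>1 a n) = (\<beta>1 + Q * (\<Sum>k\<in>{2 - int L..int n}. a k)) mod M"
proof -
  let ?past = "\<Sum>k\<in>{2 - int L..int n - int L}. a k"
  let ?window = "\<Sum>k\<in>{int n - int L + 1..int n}. a k"
  have window: "sum_list (map (\<lambda>i. a (int n - int L + 1 + int i)) [0..<L]) = ?window"
    using sum_list_map_upt_int_shift[of a "int n - int L + 1" L] by simp
  have split: "?past + ?window = (\<Sum>k\<in>{2 - int L..int n}. a k)"
    using assms(2,3) by (subst sum.union_disjoint[symmetric]) (auto intro: sum.cong)
  have "edge_label M Q (path_edge L Q P \<beta>1 a n) = ((\<beta>1 + Q * ?past) mod P + Q * ?window) mod M"
    by (simp add: edge_label_def window path_edge_def cpm_phase_def)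
  also have "\<dots> = ((\<beta>1 + Q * ?past) mod P mod M + Q * ?window) mod M"
    by (rule mod_add_left_eq[symmetric])
  also have "\<dots> = (\<beta>1 + Q * ?past + Q * ?window) mod M"
    by (simp only: mod_mod_cancel[OF assms(1)] mod_add_left_eq)
  finally show ?thesis
    by (simp add: split[symmetric] distrib_left add.assoc)
qed

lemma error_event_running_sum_diff:
  assumes ev: "error_event M L Q P b \<beta>1 a1 a2" and "L \<ge> 1" "length b \<le> n"
  shows "int (\<Sum>k\<in>{2 - int L..int n}. a1 k) - int (\<Sum>k\<in>{2 - int L..int n}. a2 k) = sum_list b"
proof -
  define d where "d k = int (a1 k) - int (a2 k)" for k
  have past: "\<forall>k\<le>0. a1 k = a2 k" and future: "\<forall>k>int (length b). a1 k = a2 k"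
    and diff: "\<forall>m\<in>{1..length b}. int (a1 (int m)) - int (a2 (int m)) = b ! (m - 1)"
    using ev unfolding error_event_def by auto
  have "int (\<Sum>k\<in>{2 - int L..int n}. a1 k) - int (\<Sum>k\<in>{2 - int L..int n}. a2 k)
      = (\<Sum>k\<in>{2 - int L..int n}. d k)"
    by (simp add: d_def sum_subtractf)
  also have "\<dots> = (\<Sum>k\<in>{1..int (length b)}. d k)"
    using assms(2,3) past future by (intro sum.mono_neutral_right) (auto simp: d_def)
  also have "\<dots> = (\<Sum>i<length b. b ! i)"
  proof (rule sum.reindex_bij_witness[of _ "\<lambda>i. int i + 1" "\<lambda>k. nat k - 1"])
    fix k assume k: "k \<in> {1..int (length b)}"
    then have m: "nat k \<in> {1..length b}" by auto
    show "b ! (nat k - 1) = d k" using diff[rule_format, OF m] k by (simp add: d_def)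
  qed auto
  also have "\<dots> = sum_list b"
    by (simp add: sum_list_sum_nth atLeast0LessThan)
  finally show ?thesis .
qed

lemma error_event_edge_label_eq:
  assumes "error_event M L Q P b \<beta>1 a1 a2" "M dvd P" "L \<ge> 1" "length b \<le> n"
  shows "edge_label M Q (path_edge L Q P \<beta>1 a1 n) = edge_label M Q (path_edge L Q P \<beta>1 a2 n)"
proof -
  let ?S = "\<lambda>a. \<Sum>k\<in>{2 - int L..int n}. a k"
  have "n \<ge> 1" using assms(1,4) by (cases b) (auto simp: error_event_def is_diff_seq_def)
  have "int P dvd sum_list b" using assms(1) by (simp add: error_event_def is_diff_seq_def)
  then have "int M dvd int (?S a1) - int (?S a2)"
    using error_event_running_sum_diff[OF assms(1,3,4)] assms(2) by (metis dvd_trans int_dvd_int_iff)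
  then have "int M dvd int (\<beta>1 + Q * ?S a1) - int (\<beta>1 + Q * ?S a2)"
    by (simp add: right_diff_distrib[symmetric])
  then have "int (\<beta>1 + Q * ?S a1) mod int M = int (\<beta>1 + Q * ?S a2) mod int M"
    by (simp only: mod_eq_dvd_iff)
  then have "(\<beta>1 + Q * ?S a1) mod M = (\<beta>1 + Q * ?S a2) mod M"
    by (simp only: of_nat_mod[symmetric] of_nat_eq_iff)
  then show ?thesis using edge_label_path_edge[OF assms(2,3) \<open>n \<ge> 1\<close>] by simp
qed

lemma start_state_path_edge_1:
  assumes "\<forall>k\<le>0. a1 k = a2 k" "L \<ge> 1"
  shows "start_state L (path_edge L Q P \<beta>1 a1 1) = start_state L (path_edge L Q P \<beta>1 a2 1)"
  using assms by (simp add: start_state_def path_edge_def cpm_phase_def take_map take_upt)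

lemma adjacent_G_edge_label_eq:
  assumes adj: "adjacent_G M L Q P b e e'" and "length b \<le> 2" "M dvd P" "L \<ge> 1"
  shows "edge_label M Q e = edge_label M Q e'"
proof -
  obtain \<beta>1 a1 a2 n where ev: "error_event M L Q P b \<beta>1 a1 a2" and "1 \<le> n"
    and pair: "{e, e'} = {path_edge L Q P \<beta>1 a1 n, path_edge L Q P \<beta>1 a2 n}"
    using adj unfolding adjacent_G_def by blast
  have "start_state L e \<noteq> start_state L e'" using adj unfolding adjacent_G_def by blast
  moreover have "\<forall>k\<le>0. a1 k = a2 k" using ev unfolding error_event_def by blast
  ultimately have "n \<noteq> 1" using start_state_path_edge_1[OF _ assms(4)] pair
    by (auto simp: doubleton_eq_iff)
  then have "length b \<le> n" using \<open>1 \<le> n\<close> assms(2) by linarith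
  then show ?thesis using error_event_edge_label_eq[OF ev assms(3,4)] pair
    by (auto simp: doubleton_eq_iff)
qed

text \<open>Of the hypotheses on the scheme only \<open>M > 0\<close>, \<open>L \<ge> 1\<close>, \<open>M dvd P\<close>, \<open>coprime Q P\<close> and \<open>\<Delta>(b) \<le> 2\<close> for
  minimising \<open>b\<close> are used.\<close>

theorem proposition4:
  fixes M L Q P :: nat and T :: real and q :: "real \<Rightarrow> real"
  assumes "M > 2" and "L \<ge> 1" and "Q > 0" and "P > 0" and "coprime Q P"
    and "T > 0" and "continuous_on UNIV q"
    and "\<forall>t\<le>0. q t = 0" and "\<forall>t\<ge>real L * T. q t = 1/2"
    and "\<forall>b. achieves_min_dist M Q P T q b \<longrightarrow> length b = 2 \<and> \<bar>b ! 1\<bar> = 1"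
    and "M dvd P"
  shows "\<exists>Ts :: nat \<Rightarrow> (nat list \<times> nat) set.
     (\<Union>i<M. Ts i) = cpm_edges M L P \<and>
     (\<forall>i<M. \<forall>j<M. i \<noteq> j \<longrightarrow> Ts i \<inter> Ts j = {}) \<and>
     (\<forall>i<M. card (Ts i) = P * M ^ (L - 1)) \<and>
     (\<forall>b e e'. achieves_min_dist M Q P T q b \<longrightarrow> adjacent_G M L Q P b e e' \<longrightarrow>
        (\<exists>i<M. e \<in> Ts i \<and> e' \<in> Ts i)) \<and>
     (\<forall>e\<in>cpm_edges M L P. \<forall>e'\<in>cpm_edges M L P.
        e \<noteq> e' \<and> start_state L e = start_state L e' \<longrightarrow> \<not> (\<exists>i<M. e \<in> Ts i \<and> e' \<in> Ts i))"
proof -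
  define Ts where "Ts i = {e \<in> cpm_edges M L P. edge_label M Q e = i}" for i
  have "coprime Q M" using coprime_divisors[OF dvd_refl \<open>M dvd P\<close> \<open>coprime Q P\<close>] .
  have label_less: "edge_label M Q e < M" for e using \<open>M > 2\<close> by (simp add: edge_label_less)
  have "(\<Union>i<M. Ts i) = cpm_edges M L P" using label_less by (auto simp: Ts_def)
  moreover have "\<forall>i<M. \<forall>j<M. i \<noteq> j \<longrightarrow> Ts i \<inter> Ts j = {}" by (auto simp: Ts_def)
  moreover have "\<forall>i<M. card (Ts i) = P * M ^ (L - 1)"
    using card_edge_label_class[OF \<open>coprime Q M\<close> \<open>L \<ge> 1\<close>] by (simp add: Ts_def)
  moreover have "\<exists>i<M. e \<in> Ts i \<and> e' \<in> Ts i"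
    if "achieves_min_dist M Q P T q b" and adj: "adjacent_G M L Q P b e e'" for b e e'
  proof -
    have "length b \<le> 2" using that(1) assms(10) by simp
    then have "edge_label M Q e = edge_label M Q e'"
      using adjacent_G_edge_label_eq[OF adj _ \<open>M dvd P\<close> \<open>L \<ge> 1\<close>] by blast
    moreover have "e \<in> cpm_edges M L P" "e' \<in> cpm_edges M L P"
      using adj unfolding adjacent_G_def by blast+
    ultimately show ?thesis using label_less by (auto simp: Ts_def)
  qed
  moreover have "\<not> (\<exists>i<M. e \<in> Ts i \<and> e' \<in> Ts i)"
    if "e \<in> cpm_edges M L P" "e' \<in> cpm_edges M L P" "e \<noteq> e'" "start_state L e = start_state L e'"
    for e e'
    using edge_label_inj_on_start_state[OF \<open>coprime Q M\<close> \<open>L \<ge> 1\<close> that(1,2,4)] that(3)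
    by (auto simp: Ts_def)
  ultimately show ?thesis by (intro exI[of _ Ts] conjI) blast+
qed

end
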